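(* Let $\mathcal U$ be any nonprincipal ultrafilter on $\mathbb{N}$. There exists $r\in({}^{\star}\mathbb{R}_{\mathcal F})_F$ such that $i(r)=0$ in $\mathbb{R}_{\mathcal F}^{\circ}$ and $j(r)\neq 0$ in ${}^{\star}\mathbb{R}$.
   Context: $\mathcal F$ is the Fréchet filter of cofinite subsets of $\mathbb{N}$. Henle's ring ${}^{\star}\mathbb{R}_{\mathcal F}=\mathbb{R}^{\mathbb{N}}/\mathcal F$: classes $[x]_{\mathcal F}$ of real sequences identified when equal for all but finitely many $n$, with pointwise operations and order $[x]_{\mathcal F}\le[y]_{\mathcal F}$ iff $\{n:x_n\le y_n\}\in\mathcal F$; $({}^{\star}\mathbb{R}_{\mathcal F})_F$ is its subring of finite elements ($-n\le r\le n$ for some $n\in\mathbb{N}$). ${}^{\star}\mathbb{R}=\mathbb{R}^{\mathbb{N}}/\mathcal U$ is the hyperreal field (sequences identified when they agree on a set in $\mathcal U$). With $\mathbb{R}^{\mathbb{N}}_B$ the ring of bounded real sequences and $o=\{f\in\mathbb{R}^{\mathbb{N}}:\lim_{n\to\infty}nf(n)=0\}$ (an ideal of $\mathbb{R}^{\mathbb{N}}_B$), $\mathbb{R}_{\mathcal F}^{\circ}=\mathbb{R}^{\mathbb{N}}_B/o$. The homomorphisms are $i:({}^{\star}\mathbb{R}_{\mathcal F})_F\to\mathbb{R}_{\mathcal F}^{\circ}$, $i([x]_{\mathcal F})=[x]_o$, and $j:{}^{\star}\mathbb{R}_{\mathcal F}\to{}^{\star}\mathbb{R}$, $j([x]_{\mathcal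 F})=[x]_{\mathcal U}$. *)

theory Defs
  imports Complex_Main
begin

definition Fclass :: "(nat \<Rightarrow> real) \<Rightarrow> (nat \<Rightarrow> real) set" where
  "Fclass x = {y. \<forall>\<^sub>F n in cofinite. x n = y n}"

definition starR_F :: "(nat \<Rightarrow> real) set set" where
  "starR_F = range Fclass"

definition F_le :: "(nat \<Rightarrow> real) set \<Rightarrow> (nat \<Rightarrow> real) set \<Rightarrow> bool" where
  "F_le r s \<longleftrightarrow> (\<exists>x\<in>r. \<exists>y\<in>s. \<forall>\<^sub>F n in cofinite. x n \<le> y n)"

definition starR_F_fin :: "(nat \<Rightarrow> real) set set" where
  "starR_F_fin = {r \<in> starR_F. \<exists>m::nat.
      F_le (Fclass (\<lambda>_. - real m)) r \<and> F_le r (Fclass (\<lambda>_. real m))}"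

definition o_ideal :: "(nat \<Rightarrow> real) set" where
  "o_ideal = {f. (\<lambda>n. real n * f n) \<longlonglongrightarrow> 0}"

definition oclass :: "(nat \<Rightarrow> real) \<Rightarrow> (nat \<Rightarrow> real) set" where
  "oclass x = {y. Bseq y \<and> (\<lambda>n. x n - y n) \<in> o_ideal}"

definition R_circ :: "(nat \<Rightarrow> real) set set" where
  "R_circ = oclass ` {f. Bseq f}"

definition nonprincipal_ultrafilter :: "nat filter \<Rightarrow> bool" where
  "nonprincipal_ultrafilter U \<longleftrightarrow> U \<noteq> bot \<and>
     (\<forall>P. eventually P U \<or> eventually (\<lambda>n. \<not> P n) U) \<and>
     (\<forall>m. \<not> eventually (\<lambda>n. n = m) U)"

definition Uclass :: "nat filter \<Rightarrow> (nat \<Rightarrow> real) \<Rightarrow> (nat \<Rightarrow> real) set" where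
  "Uclass U x = {y. \<forall>\<^sub>F n in U. x n = y n}"

section \<open>The homomorphisms i and j (via any representative; well defined)\<close>

definition hom_i :: "(nat \<Rightarrow> real) set \<Rightarrow> (nat \<Rightarrow> real) set" where
  "hom_i r = oclass (SOME x. x \<in> r)"

definition hom_j :: "nat filter \<Rightarrow> (nat \<Rightarrow> real) set \<Rightarrow> (nat \<Rightarrow> real) set" where
  "hom_j U r = Uclass U (SOME x. x \<in> r)"

end

theory Submission
  imports Defs "HOL-Real_Asymp.Real_Asymp"
begin

text \<open>Take \<open>r = [n \<mapsto> 1/(n+1)\<^sup>2]\<close>. It is bounded, and \<open>n/(n+1)\<^sup>2 \<rightarrow> 0\<close>, so \<open>i(r) = 0\<close>.
  A nonprincipal ultrafilter refines the Frechet filter, so \<open>j(r)\<close> is the class of a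
  sequence that vanishes nowhere, hence \<open>j(r) \<noteq> 0\<close>.\<close>

lemma nonprincipal_ultrafilter_eventually_not_in_finite:
  assumes "nonprincipal_ultrafilter U" and "finite S"
  shows "\<forall>\<^sub>F n in U. n \<notin> S"
proof -
  have "\<forall>\<^sub>F n in U. n \<noteq> m" for m
    using assms(1) unfolding nonprincipal_ultrafilter_def by blast
  then have "\<forall>\<^sub>F n in U. \<forall>m\<in>S. n \<noteq> m"
    using assms(2) by (simp add: eventually_ball_finite)
  then show ?thesis
    by (rule eventually_mono) blast
qed

lemma nonprincipal_ultrafilter_le_cofinite:
  assumes "nonprincipal_ultrafilter U"
  shows "U \<le> cofinite"
proof (rule filter_leI)
  fix P :: "nat \<Rightarrow> bool"
  assume "eventually P cofinite"
  then have "finite {n. \<not> P n}"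
    by (simp add: eventually_cofinite)
  then have "\<forall>\<^sub>F n in U. n \<notin> {n. \<not> P n}"
    by (rule nonprincipal_ultrafilter_eventually_not_in_finite[OF assms])
  then show "eventually P U"
    by (rule eventually_mono) simp
qed

lemma Fclass_self: "x \<in> Fclass x"
  by (simp add: Fclass_def)

lemma some_in_Fclass: "(SOME y. y \<in> Fclass x) \<in> Fclass x"
  by (rule someI[where P = "\<lambda>y. y \<in> Fclass x"], rule Fclass_self)

lemma Bseq_imp_Fclass_in_starR_F_fin:
  assumes "Bseq x"
  shows "Fclass x \<in> starR_F_fin"
proof -
  obtain K where K: "\<And>n. \<bar>x n\<bar> \<le> K"
    using assms by (auto simp: Bseq_def)
  define m where "m = nat \<lceil>K\<rceil>"
  have bound: "\<bar>x n\<bar> \<le> real m" for n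
    using K[of n] unfolding m_def by linarith
  have "- real m \<le> x n \<and> x n \<le> real m" for n
    using bound[of n] by linarith
  then have "\<forall>\<^sub>F n in cofinite. - real m \<le> x n" "\<forall>\<^sub>F n in cofinite. x n \<le> real m"
    by (simp_all add: always_eventually)
  then have "F_le (Fclass (\<lambda>_. - real m)) (Fclass x) \<and> F_le (Fclass x) (Fclass (\<lambda>_. real m))"
    unfolding F_le_def by (intro conjI bexI[OF _ Fclass_self])
  then show ?thesis
    unfolding starR_F_fin_def starR_F_def by blast
qed

lemma eventually_cofinite_eq_imp_o_ideal:
  assumes "\<forall>\<^sub>F n in cofinite. x n = y n"
  shows "(\<lambda>n. x n - y n) \<in> o_ideal"
proof -
  have "\<forall>\<^sub>F n in sequentially. real n * (x n - y n) = 0"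
    using assms unfolding cofinite_eq_sequentially by (rule eventually_mono) simp
  then show ?thesis
    unfolding o_ideal_def mem_Collect_eq by (rule tendsto_eventually)
qed

lemma oclass_eqI:
  assumes "(\<lambda>n. x n - y n) \<in> o_ideal"
  shows "oclass x = oclass y"
proof -
  have xy: "(\<lambda>n. real n * (x n - y n)) \<longlonglongrightarrow> 0"
    using assms by (simp add: o_ideal_def)
  have "(\<lambda>n. real n * (x n - z n)) \<longlonglongrightarrow> 0 \<longleftrightarrow> (\<lambda>n. real n * (y n - z n)) \<longlonglongrightarrow> 0" for z
  proof
    assume "(\<lambda>n. real n * (x n - z n)) \<longlonglongrightarrow> 0"
    from tendsto_diff[OF this xy] show "(\<lambda>n. real n * (y n - z n)) \<longlonglongrightarrow> 0"
      by (simp add: algebra_simps)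
  next
    assume "(\<lambda>n. real n * (y n - z n)) \<longlonglongrightarrow> 0"
    from tendsto_add[OF this xy] show "(\<lambda>n. real n * (x n - z n)) \<longlonglongrightarrow> 0"
      by (simp add: algebra_simps)
  qed
  then show ?thesis
    by (simp add: oclass_def o_ideal_def)
qed

lemma hom_i_Fclass: "hom_i (Fclass x) = oclass x"
proof -
  have "\<forall>\<^sub>F n in cofinite. (SOME y. y \<in> Fclass x) n = x n"
    using some_in_Fclass[of x] by (simp add: Fclass_def eq_commute)
  then show ?thesis
    unfolding hom_i_def by (intro oclass_eqI eventually_cofinite_eq_imp_o_ideal)
qed

lemma Uclass_eq_iff: "Uclass U x = Uclass U y \<longleftrightarrow> (\<forall>\<^sub>F n in U. x n = y n)"
proof
  assume eq: "Uclass U x = Uclass U y"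
  have "x \<in> Uclass U x"
    by (simp add: Uclass_def)
  then have "\<forall>\<^sub>F n in U. y n = x n"
    unfolding eq by (simp add: Uclass_def)
  then show "\<forall>\<^sub>F n in U. x n = y n"
    by (rule eventually_mono) simp
next
  assume xy: "\<forall>\<^sub>F n in U. x n = y n"
  have "(\<forall>\<^sub>F n in U. x n = z n) \<longleftrightarrow> (\<forall>\<^sub>F n in U. y n = z n)" for z
    using xy by (auto elim: eventually_elim2)
  then show "Uclass U x = Uclass U y"
    by (simp add: Uclass_def)
qed

lemma hom_j_Fclass:
  assumes "U \<le> cofinite"
  shows "hom_j U (Fclass x) = Uclass U x"
proof -
  have "\<forall>\<^sub>F n in cofinite. (SOME y. y \<in> Fclass x) n = x n"
    using some_in_Fclass[of x] by (simp add: Fclass_def eq_commute)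
  then have "\<forall>\<^sub>F n in U. (SOME y. y \<in> Fclass x) n = x n"
    using assms by (rule filter_leD[rotated])
  then show ?thesis
    unfolding hom_j_def by (simp add: Uclass_eq_iff)
qed

theorem mainTheorem6:
  fixes U :: "nat filter"
  assumes "nonprincipal_ultrafilter U"
  shows "\<exists>r \<in> starR_F_fin. hom_i r = oclass (\<lambda>_. 0) \<and> hom_j U r \<noteq> Uclass U (\<lambda>_. 0)"
proof -
  define x :: "nat \<Rightarrow> real" where "x n = 1 / (real n + 1)^2" for n
  have "Fclass x \<in> starR_F_fin"
  proof (rule Bseq_imp_Fclass_in_starR_F_fin, rule convergent_imp_Bseq, rule convergentI)
    show "x \<longlonglongrightarrow> 0"
      unfolding x_def by real_asymp
  qed
  moreover have "hom_i (Fclass x) = oclass (\<lambda>_. 0)"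
  proof -
    have "(\<lambda>n. x n - 0) \<in> o_ideal"
      unfolding o_ideal_def mem_Collect_eq x_def by real_asymp
    then show ?thesis
      by (simp add: hom_i_Fclass oclass_eqI)
  qed
  moreover have "hom_j U (Fclass x) \<noteq> Uclass U (\<lambda>_. 0)"
  proof -
    have "\<not> (\<forall>\<^sub>F n in U. x n = 0)"
      using assms by (simp add: x_def nonprincipal_ultrafilter_def)
    then show ?thesis
      using assms by (simp add: hom_j_Fclass nonprincipal_ultrafilter_le_cofinite Uclass_eq_iff)
  qed
  ultimately show ?thesis
    by blast
qed

end
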